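(* Assume $G$ is connected with $n\ge2$. Let $0=\lambda_1<\lambda_2\le\dots\le\lambda_n$ be the eigenvalues of $\Delta$. Let $S\subset V$ with $\emptyset\ne S\ne V$ and $R_S:=\mathrm{vol}\,S/\mathrm{vol}\,V\ne\frac12$. Define $$\tau_\rho(S)=\lambda_n^{-1}\log\Big(1+\tfrac12d_-^{r/2}(\mathrm{vol}\,S)^{-1/2}\Big),$$ $$\tau_t(S)=\frac1{\lambda_2}\log\left(\frac{(\mathrm{vol}\,S)^{1/2}(\mathrm{vol}\,S^c)^{1/2}}{(\mathrm{vol}\,V)^{1/2}|R_S-\frac12|d_-^{r/2}}\right).$$ If $\dfrac{\lambda_2}{\lambda_n}<\dfrac{\log\sqrt2}{\log\frac32}$, then $\tau_\rho(S)<\tau_t(S)$.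
   Context: $G=(V,E)$ is a finite undirected weighted graph with vertex set $V=\{1,\dots,n\}$. The weights satisfy $\omega_{ij}=\omega_{ji}\ge0$, with $\omega_{ij}>0$ iff $\{i,j\}\in E$, and $\omega_{ii}=0$. The degrees are $d_i=\sum_j\omega_{ij}>0$, and $d_-=\min_id_i$. A parameter $r\in[0,1]$ is fixed. For $S\subset V$, $S^c=V\setminus S$ and $\mathrm{vol}\,S=\sum_{i\in S}d_i^r$. The graph Laplacian is $(\Delta u)_i=d_i^{-r}\sum_j\omega_{ij}(u_i-u_j)$, and its eigenvalues are those of the matrix $D^{-r}(D-A)$, where $A=(\omega_{ij})$ and $D=\mathrm{diag}(d_i)$. *)

theory Defs
  imports "Jordan_Normal_Form.Char_Poly"
begin

(* Vertices are 0..<n (shifted from 1..n); weights w :: nat => nat => real. *)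

definition deg :: "(nat \<Rightarrow> nat \<Rightarrow> real) \<Rightarrow> nat \<Rightarrow> nat \<Rightarrow> real" where
  "deg w n i = (\<Sum>j<n. w i j)"

definition dmin :: "(nat \<Rightarrow> nat \<Rightarrow> real) \<Rightarrow> nat \<Rightarrow> real" where
  "dmin w n = Min (deg w n ` {..<n})"

definition vol :: "(nat \<Rightarrow> nat \<Rightarrow> real) \<Rightarrow> nat \<Rightarrow> real \<Rightarrow> nat set \<Rightarrow> real" where
  "vol w n r S = (\<Sum>i\<in>S. deg w n i powr r)"

definition laplacian_mat :: "(nat \<Rightarrow> nat \<Rightarrow> real) \<Rightarrow> nat \<Rightarrow> real \<Rightarrow> real mat" where
  "laplacian_mat w n r = mat n n (\<lambda>(i,j). deg w n i powr (-r) *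
      ((if i = j then deg w n i else 0) - w i j))"

definition edge_rel :: "(nat \<Rightarrow> nat \<Rightarrow> real) \<Rightarrow> nat \<Rightarrow> (nat \<times> nat) set" where
  "edge_rel w n = {(i,j). i < n \<and> j < n \<and> w i j > 0}"

definition connected_graph :: "(nat \<Rightarrow> nat \<Rightarrow> real) \<Rightarrow> nat \<Rightarrow> bool" where
  "connected_graph w n = (\<forall>i<n. \<forall>j<n. (i,j) \<in> (edge_rel w n)\<^sup>*)"

definition tau_rho :: "(nat \<Rightarrow> nat \<Rightarrow> real) \<Rightarrow> nat \<Rightarrow> real \<Rightarrow> real \<Rightarrow> nat set \<Rightarrow> real" where
  "tau_rho w n r lam_n S =
     (1 / lam_n) * ln (1 + (1/2) * dmin w n powr (r/2) * vol w n r S powr (-1/2))"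

definition tau_t :: "(nat \<Rightarrow> nat \<Rightarrow> real) \<Rightarrow> nat \<Rightarrow> real \<Rightarrow> real \<Rightarrow> nat set \<Rightarrow> real" where
  "tau_t w n r lam_2 S =
     (let V = {..<n}; RS = vol w n r S / vol w n r V in
      (1 / lam_2) * ln ((vol w n r S powr (1/2) * vol w n r (V - S) powr (1/2)) /
         (vol w n r V powr (1/2) * \<bar>RS - 1/2\<bar> * dmin w n powr (r/2))))"

end

theory Submission
  imports Defs "Jordan_Normal_Form.Schur_Decomposition"
begin

(*
  The matrix D^(-r)(D - A) is self-adjoint for the inner product weighted by d_i^r, and
  u . D^r L u = 1/2 \<Sum>\<^sub>i\<^sub>j w_ij (u_i - u_j)^2 (discrete Green identity). Hence all eigenvalues
  are nonnegative, and on a connected graph the kernel consists of the constants. If 0 were a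
  double root of the characteristic polynomial, a Schur triangularisation would produce u, v
  independent with L u = 0 and L v = c u; summing L v against the weights d^r gives 0, so
  c = 0 and v would be constant as well. Thus \<lambda>\<^sub>2 > 0.

  Since every volume is at least d_-^r, the logarithm in \<tau>\<^sub>\<rho> is at most log(3/2). With
  a = vol S and c = vol S^c, the argument of the logarithm in \<tau>\<^sub>t exceeds \<surd>2 because
  (a - c)^2 d_-^r < 2 a c (a + c). The spectral-ratio hypothesis then separates the two bounds.
*)

lemma sq_diff_mult_lt:
  fixes a c t :: real
  assumes "0 < t" "t \<le> a" "t \<le> c"
  shows "(a - c)^2 * t < 2 * a * c * (a + c)"
proof -
  have ordered: "(a - c)^2 * t < 2 * a * c * (a + c)"
    if "0 < t" "t \<le> a" "a \<le> c" for a c t :: real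
  proof -
    have "(c - a)^2 \<le> c^2"
      using that by (intro power_mono) auto
    hence "(a - c)^2 \<le> c^2" by (simp add: power2_commute)
    hence "(a - c)^2 * t \<le> c^2 * a"
      using that by (intro mult_mono) auto
    also have "c^2 * a < 2 * a * c * (a + c)"
      using that by (auto simp: power2_eq_square algebra_simps intro!: add_pos_pos)
    finally show ?thesis .
  qed
  show ?thesis
  proof (cases "a \<le> c")
    case True thus ?thesis using ordered assms by blast
  next
    case False
    thus ?thesis using ordered[of t c a] assms by (simp add: power2_commute algebra_simps)
  qed
qed

lemma ln_one_plus_half_le:
  fixes \<delta> a :: real
  assumes "0 < \<delta>" "\<delta>^2 \<le> a"
  shows "ln (1 + 1/2 * \<delta> * a powr (-1/2)) \<le> ln (3/2)"
proof -
  have a: "0 < a" using assms by (smt (verit) zero_less_power)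
  have "\<delta> \<le> sqrt a" using assms real_le_rsqrt by auto
  hence "\<delta> * a powr (-1/2) \<le> 1"
    using a by (simp add: powr_minus powr_half_sqrt divide_simps)
  moreover have "0 < \<delta> * a powr (-1/2)" using a assms by simp
  ultimately show ?thesis by simp
qed

lemma sqrt2_lt_balance_ratio:
  fixes \<delta> a c :: real
  assumes "0 < \<delta>" "\<delta>^2 \<le> a" "\<delta>^2 \<le> c" "a \<noteq> c"
  shows "sqrt 2 < sqrt a * sqrt c / (sqrt (a + c) * \<bar>a / (a + c) - 1/2\<bar> * \<delta>)"
proof -
  have d2: "0 < \<delta>^2" using assms by simp
  have a: "0 < a" and c: "0 < c" using assms d2 by linarith+
  define X where "X = sqrt (a + c) * \<bar>a / (a + c) - 1/2\<bar> * \<delta>"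
  have X: "0 < X"
    using a c assms by (auto simp: X_def field_simps)
  have "a / (a + c) - 1/2 = (a - c) / (2 * (a + c))"
    using a c by (simp add: field_simps)
  hence "X^2 = (sqrt (a + c))^2 * ((a - c) / (2 * (a + c)))^2 * \<delta>^2"
    by (simp only: X_def power_mult_distrib power2_abs)
  also have "\<dots> = (a + c) * ((a - c) / (2 * (a + c)))^2 * \<delta>^2"
    using a c by simp
  also have "\<dots> = (a - c)^2 * \<delta>^2 / (4 * (a + c))"
  proof -
    have "s * (x / (2 * s))^2 = x^2 / (4 * s)" if "0 < s" for s x :: real
      using that by (simp add: power2_eq_square)
    from this[of "a + c" "a - c"] show ?thesis using a c by (simp add: times_divide_eq_left)
  qed
  also have "\<dots> < a * c / 2"
    using sq_diff_mult_lt[OF d2 assms(2,3)] a c by (simp add: field_simps)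
  finally have "2 * X^2 < a * c" by simp
  hence "sqrt (2 * X^2) < sqrt (a * c)" by simp
  hence "sqrt 2 * X < sqrt a * sqrt c" using X by (simp add: real_sqrt_mult)
  thus ?thesis using X by (simp add: X_def real_sqrt_mult pos_less_divide_eq)
qed

lemma similar_mat_wit_mult_vec:
  assumes A: "A \<in> carrier_mat n n" and wit: "similar_mat_wit A B P Q" and x: "x \<in> carrier_vec n"
  shows "A *\<^sub>v (P *\<^sub>v x) = P *\<^sub>v (B *\<^sub>v x)" and "Q *\<^sub>v (P *\<^sub>v x) = x"
proof -
  from similar_mat_witD2[OF A wit] have B: "B \<in> carrier_mat n n" and P: "P \<in> carrier_mat n n"
    and Q: "Q \<in> carrier_mat n n" and QP: "Q * P = 1\<^sub>m n" and APBQ: "A = P * B * Q"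
    by auto
  show QPx: "Q *\<^sub>v (P *\<^sub>v x) = x"
    using P Q x QP by (metis assoc_mult_mat_vec one_mult_mat_vec)
  have "A *\<^sub>v (P *\<^sub>v x) = (P * B) *\<^sub>v (Q *\<^sub>v (P *\<^sub>v x))"
    unfolding APBQ using P B Q x by (intro assoc_mult_mat_vec) auto
  also have "\<dots> = P *\<^sub>v (B *\<^sub>v x)" using QPx P B x by simp
  finally show "A *\<^sub>v (P *\<^sub>v x) = P *\<^sub>v (B *\<^sub>v x)" .
qed

lemma char_poly_double_zero_root_chain:
  fixes A :: "'a :: conjugatable_ordered_field mat"
  assumes A: "A \<in> carrier_mat n n" and cp: "char_poly A = (\<Prod>e\<leftarrow>es. [:- e, 1:])"
    and n: "n \<ge> 2" and es: "es ! 0 = 0" "es ! 1 = 0"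
  obtains u v c where "u \<in> carrier_vec n" "v \<in> carrier_vec n" "u \<noteq> 0\<^sub>v n"
    "A *\<^sub>v u = 0\<^sub>v n" "A *\<^sub>v v = c \<cdot>\<^sub>v u" "\<forall>k. v \<noteq> k \<cdot>\<^sub>v u"
proof -
  obtain B P Q where sd: "schur_decomposition A es = (B, P, Q)" by (metis prod_cases3)
  from schur_decomposition[OF A cp sd] have wit: "similar_mat_wit A B P Q"
    and ut: "upper_triangular B" and dg: "diag_mat B = es" by auto
  from similar_mat_witD2[OF A wit] have B: "B \<in> carrier_mat n n" and P: "P \<in> carrier_mat n n"
    and Q: "Q \<in> carrier_mat n n" by auto
  have B00: "B $$ (0, 0) = 0" and B11: "B $$ (1, 1) = 0"
    using dg es n B by (auto simp: diag_mat_def)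
  have Blow: "B $$ (i, j) = 0" if "i < n" "j < i" for i j
    using ut that B unfolding upper_triangular_def by auto
  define e0 :: "'a vec" where "e0 = unit_vec n 0"
  define e1 :: "'a vec" where "e1 = unit_vec n 1"
  have e0: "e0 \<in> carrier_vec n" and e1: "e1 \<in> carrier_vec n" by (auto simp: e0_def e1_def)
  have Be0: "B *\<^sub>v e0 = 0\<^sub>v n"
    using B n B00 Blow by (intro eq_vecI) (auto simp: e0_def)
  have Be1: "B *\<^sub>v e1 = B $$ (0, 1) \<cdot>\<^sub>v e0"
  proof (intro eq_vecI)
    fix i assume "i < dim_vec (B $$ (0, 1) \<cdot>\<^sub>v e0)"
    hence i: "i < n" by (simp add: e0_def)
    show "(B *\<^sub>v e1) $ i = (B $$ (0, 1) \<cdot>\<^sub>v e0) $ i"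
      using i B n B11 Blow[OF i, of 1] by (cases "i = 0"; cases "i = 1") (auto simp: e0_def e1_def)
  qed (use B in \<open>auto simp: e0_def\<close>)
  note sim = similar_mat_wit_mult_vec[OF A wit]
  show ?thesis
  proof
    show "P *\<^sub>v e0 \<in> carrier_vec n" "P *\<^sub>v e1 \<in> carrier_vec n" using P e0 e1 by auto
    show "A *\<^sub>v (P *\<^sub>v e0) = 0\<^sub>v n" using sim(1)[OF e0] Be0 P by auto
    show "A *\<^sub>v (P *\<^sub>v e1) = B $$ (0, 1) \<cdot>\<^sub>v (P *\<^sub>v e0)"
      using sim(1)[OF e1] Be1 mult_mat_vec[OF P e0] by simp
    show "P *\<^sub>v e0 \<noteq> 0\<^sub>v n"
    proof
      assume "P *\<^sub>v e0 = 0\<^sub>v n"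
      hence "e0 = Q *\<^sub>v 0\<^sub>v n" using sim(2)[OF e0] by simp
      also have "\<dots> = 0\<^sub>v n" using Q by auto
      finally show False using n by (simp add: e0_def)
    qed
    show "\<forall>k. P *\<^sub>v e1 \<noteq> k \<cdot>\<^sub>v (P *\<^sub>v e0)"
    proof (intro allI notI)
      fix k
      assume "P *\<^sub>v e1 = k \<cdot>\<^sub>v (P *\<^sub>v e0)"
      hence "e1 = Q *\<^sub>v (k \<cdot>\<^sub>v (P *\<^sub>v e0))" using sim(2)[OF e1] by simp
      also have "\<dots> = k \<cdot>\<^sub>v e0" using mult_mat_vec[OF Q] sim(2)[OF e0] P e0 by simp
      finally have "e1 $ 1 = (k \<cdot>\<^sub>v e0) $ 1" by simp
      thus False using n by (simp add: e0_def e1_def)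
    qed
  qed
qed

lemma discrete_green_identity:
  fixes w :: "nat \<Rightarrow> nat \<Rightarrow> real"
  assumes sym: "\<forall>i<n. \<forall>j<n. w i j = w j i"
  shows "(\<Sum>i<n. g i * (\<Sum>j<n. w i j * (f i - f j))) =
    1/2 * (\<Sum>i<n. \<Sum>j<n. w i j * (f i - f j) * (g i - g j))"
proof -
  have swap: "(\<Sum>i<n. \<Sum>j<n. w i j * (f i - f j) * g i) = (\<Sum>i<n. \<Sum>j<n. - (w i j * (f i - f j) * g j))"
    by (subst sum.swap) (use sym in \<open>auto intro!: sum.cong simp: algebra_simps\<close>)
  have "(\<Sum>i<n. \<Sum>j<n. w i j * (f i - f j) * (g i - g j)) =
     (\<Sum>i<n. \<Sum>j<n. w i j * (f i - f j) * g i) + (\<Sum>i<n. \<Sum>j<n. - (w i j * (f i - f j) * g j))"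
    by (simp add: sum.distrib[symmetric] algebra_simps)
  thus ?thesis using swap by (simp add: sum_distrib_left mult_ac)
qed

lemma laplacian_mat_carrier [simp]: "laplacian_mat w n r \<in> carrier_mat n n"
  by (simp add: laplacian_mat_def)

lemma laplacian_mult_vec_nth:
  assumes u: "u \<in> carrier_vec n" and i: "i < n"
  shows "(laplacian_mat w n r *\<^sub>v u) $ i = deg w n i powr (-r) * (\<Sum>j<n. w i j * (u$i - u$j))"
proof -
  have "(laplacian_mat w n r *\<^sub>v u) $ i =
      deg w n i powr (-r) * ((\<Sum>j<n. (if i = j then deg w n i else 0) * u$j) - (\<Sum>j<n. w i j * u$j))"
    using u i by (simp add: laplacian_mat_def scalar_prod_def atLeast0LessThan sum_distrib_left
        sum_subtractf[symmetric] algebra_simps)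
  also have "(\<Sum>j<n. (if i = j then deg w n i else 0) * u$j) = (\<Sum>j<n. w i j * u$i)"
    using i by (simp add: if_distrib[where f="\<lambda>x. x * _"] deg_def sum_distrib_right cong: if_cong)
  finally show ?thesis by (simp add: sum_subtractf[symmetric] algebra_simps)
qed

lemma dmin_le_deg: "i < n \<Longrightarrow> dmin w n \<le> deg w n i"
  unfolding dmin_def by (intro Min_le) auto

lemma vol_split: "S \<subseteq> {..<n} \<Longrightarrow> vol w n r {..<n} = vol w n r S + vol w n r ({..<n} - S)"
  unfolding vol_def by (metis finite_lessThan sum.subset_diff add.commute)

locale weighted_graph =
  fixes w :: "nat \<Rightarrow> nat \<Rightarrow> real" and n :: nat
  assumes sym: "\<forall>i<n. \<forall>j<n. w i j = w j i"
    and nonneg: "\<forall>i<n. \<forall>j<n. w i j \<ge> 0"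
    and deg_pos: "\<forall>i<n. deg w n i > 0"
begin

lemma deg_powr_mult_laplacian:
  assumes "u \<in> carrier_vec n" "i < n"
  shows "deg w n i powr r * (laplacian_mat w n r *\<^sub>v u) $ i = (\<Sum>j<n. w i j * (u$i - u$j))"
  using laplacian_mult_vec_nth[OF assms, of w r] deg_pos[rule_format, OF assms(2)]
  by (simp add: powr_minus field_simps)

lemma laplacian_energy:
  assumes u: "u \<in> carrier_vec n"
  shows "(\<Sum>i<n. u$i * deg w n i powr r * (laplacian_mat w n r *\<^sub>v u) $ i) =
    1/2 * (\<Sum>i<n. \<Sum>j<n. w i j * (u$i - u$j)^2)"
  using discrete_green_identity[OF sym, of "\<lambda>i. u$i" "\<lambda>i. u$i"] deg_powr_mult_laplacian[OF u]
  by (simp add: mult.assoc power2_eq_square)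

lemma weighted_sum_laplacian_eq_0:
  assumes u: "u \<in> carrier_vec n"
  shows "(\<Sum>i<n. deg w n i powr r * (laplacian_mat w n r *\<^sub>v u) $ i) = 0"
  using discrete_green_identity[OF sym, of "\<lambda>_. 1" "\<lambda>i. u$i"] deg_powr_mult_laplacian[OF u]
  by simp

lemma laplacian_eigenvalue_nonneg:
  assumes u: "u \<in> carrier_vec n" "u \<noteq> 0\<^sub>v n"
    and ev: "laplacian_mat w n r *\<^sub>v u = \<mu> \<cdot>\<^sub>v u"
  shows "\<mu> \<ge> 0"
proof -
  obtain k where k: "k < n" "u$k \<noteq> 0"
    using u by (metis carrier_vecD eq_vecI index_zero_vec)
  have "deg w n k powr r * (u$k)^2 \<le> (\<Sum>i<n. deg w n i powr r * (u$i)^2)"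
    using k by (intro member_le_sum) auto
  moreover have "0 < deg w n k powr r * (u$k)^2" using k deg_pos[rule_format, OF k(1)] by simp
  ultimately have mass: "0 < (\<Sum>i<n. deg w n i powr r * (u$i)^2)" by linarith
  have "\<mu> * (\<Sum>i<n. deg w n i powr r * (u$i)^2) = 1/2 * (\<Sum>i<n. \<Sum>j<n. w i j * (u$i - u$j)^2)"
    using laplacian_energy[OF u(1), of r] ev u(1)
    by (simp add: sum_distrib_left power2_eq_square mult_ac)
  also have "\<dots> \<ge> 0" using nonneg by (auto intro!: sum_nonneg)
  finally show ?thesis using mass by (simp add: zero_le_mult_iff)
qed

lemma laplacian_kernel_const:
  assumes conn: "connected_graph w n" and u: "u \<in> carrier_vec n"
    and ker: "laplacian_mat w n r *\<^sub>v u = 0\<^sub>v n" and j: "j < n"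
  shows "u$j = u$0"
proof -
  have "(\<Sum>(i, j)\<in>{..<n} \<times> {..<n}. w i j * (u$i - u$j)^2) = 0"
    using laplacian_energy[OF u, of r] ker u by (simp add: sum.cartesian_product)
  hence no_jump: "w a b * (u$a - u$b)^2 = 0" if "a < n" "b < n" for a b
    using that nonneg by (subst (asm) sum_nonneg_eq_0_iff) auto
  have edge: "u$a = u$b" if "(a, b) \<in> edge_rel w n" for a b
    using that no_jump[of a b] by (auto simp: edge_rel_def)
  from conn j have "(0, j) \<in> (edge_rel w n)\<^sup>*" by (auto simp: connected_graph_def)
  thus ?thesis by (induction rule: rtrancl_induct) (auto dest: edge)
qed

lemma laplacian_second_eigenvalue_pos:
  fixes lam :: "nat \<Rightarrow> real"
  assumes n: "n \<ge> 2" and conn: "connected_graph w n"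
    and sorted: "\<forall>i j. i \<le> j \<longrightarrow> j < n \<longrightarrow> lam i \<le> lam j"
    and eig: "char_poly (laplacian_mat w n r) = (\<Prod>i<n. [:- lam i, 1:])"
  shows "lam 1 > 0"
proof (rule ccontr)
  let ?L = "laplacian_mat w n r"
  have lam_nonneg: "lam i \<ge> 0" if i: "i < n" for i
  proof -
    have "poly (char_poly ?L) (lam i) = 0"
      unfolding eig poly_prod using i by (auto intro!: prod_zero)
    hence "eigenvalue ?L (lam i)"
      using eigenvalue_root_char_poly[OF laplacian_mat_carrier[of w n r]] by simp
    then obtain u where "u \<in> carrier_vec n" "u \<noteq> 0\<^sub>v n" "?L *\<^sub>v u = lam i \<cdot>\<^sub>v u"
      unfolding eigenvalue_def eigenvector_def by (auto simp: carrier_matD[OF laplacian_mat_carrier[of w n r]])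
    thus ?thesis by (rule laplacian_eigenvalue_nonneg)
  qed
  assume "\<not> lam 1 > 0"
  hence "lam 1 = 0" using lam_nonneg[of 1] n by simp
  hence zeros: "map lam [0..<n] ! 0 = 0" "map lam [0..<n] ! 1 = 0"
    using lam_nonneg[of 0] sorted[rule_format, of 0 1] n by simp_all
  have cp: "char_poly ?L = (\<Prod>e\<leftarrow>map lam [0..<n]. [:- e, 1:])"
    unfolding eig by (simp add: prod.distinct_set_conv_list[symmetric] atLeast0LessThan)
  obtain u v c where u: "u \<in> carrier_vec n" and v: "v \<in> carrier_vec n"
    and u_nz: "u \<noteq> 0\<^sub>v n" and Lu: "?L *\<^sub>v u = 0\<^sub>v n" and Lv: "?L *\<^sub>v v = c \<cdot>\<^sub>v u"
    and indep: "\<forall>k. v \<noteq> k \<cdot>\<^sub>v u"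
    by (rule char_poly_double_zero_root_chain[OF laplacian_mat_carrier cp n zeros])
  have u_const: "u$i = u$0" if "i < n" for i
    using laplacian_kernel_const[OF conn u Lu that] .
  have u0: "u$0 \<noteq> 0"
  proof
    assume "u$0 = 0"
    hence "u = 0\<^sub>v n" using u u_const by (intro eq_vecI) auto
    with u_nz show False ..
  qed
  have "0 = (\<Sum>i<n. deg w n i powr r * (?L *\<^sub>v v) $ i)"
    by (rule weighted_sum_laplacian_eq_0[OF v, symmetric])
  also have "\<dots> = (\<Sum>i<n. deg w n i powr r * (c * u$0))"
  proof (rule sum.cong[OF refl])
    fix i assume "i \<in> {..<n}"
    thus "deg w n i powr r * (?L *\<^sub>v v) $ i = deg w n i powr r * (c * u$0)"
      using Lv u u_const[of i] by simp
  qed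
  also have "\<dots> = c * u$0 * (\<Sum>i<n. deg w n i powr r)"
    by (simp add: sum_distrib_left mult_ac)
  moreover have "0 < (\<Sum>i<n. deg w n i powr r)"
    using deg_pos n by (intro sum_pos) (auto simp: lessThan_empty_iff)
  ultimately have "c = 0" using u0 by simp
  hence "?L *\<^sub>v v = 0\<^sub>v n" using Lv u by auto
  hence v_const: "v$i = v$0" if "i < n" for i
    using laplacian_kernel_const[OF conn v _ that] by simp
  have "v = (v$0 / u$0) \<cdot>\<^sub>v u"
  proof (rule eq_vecI)
    fix i assume "i < dim_vec ((v$0 / u$0) \<cdot>\<^sub>v u)"
    thus "v$i = ((v$0 / u$0) \<cdot>\<^sub>v u) $ i" using u u0 u_const[of i] v_const[of i] by simp
  qed (use u v in simp)
  with indep show False by blast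
qed

lemma dmin_pos: "0 < n \<Longrightarrow> 0 < dmin w n"
  unfolding dmin_def using deg_pos by (subst Min_gr_iff) auto

lemma dmin_powr_le_vol:
  assumes "0 \<le> r" "T \<subseteq> {..<n}" "T \<noteq> {}"
  shows "dmin w n powr r \<le> vol w n r T"
proof -
  obtain k where k: "k \<in> T" using assms by auto
  have "dmin w n powr r \<le> deg w n k powr r"
    using assms k dmin_le_deg dmin_pos by (intro powr_mono2) auto
  also have "\<dots> \<le> vol w n r T"
    unfolding vol_def using k assms finite_subset by (intro member_le_sum) auto
  finally show ?thesis .
qed

lemma dmin_powr_half_sq: "0 < n \<Longrightarrow> (dmin w n powr (r/2))^2 = dmin w n powr r"
  using dmin_pos by (simp add: power2_eq_square powr_add[symmetric])

lemma tau_rho_le: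
  assumes lam: "0 < lam" and r: "0 \<le> r" and S: "S \<subseteq> {..<n}" "S \<noteq> {}"
  shows "tau_rho w n r lam S \<le> ln (3/2) / lam"
proof -
  have n: "0 < n" using S by auto
  have "(dmin w n powr (r/2))^2 \<le> vol w n r S"
    using dmin_powr_half_sq[OF n] dmin_powr_le_vol[OF r S] by simp
  hence "ln (1 + 1/2 * dmin w n powr (r/2) * vol w n r S powr (-1/2)) \<le> ln (3/2)"
    using dmin_pos[OF n] by (intro ln_one_plus_half_le) auto
  thus ?thesis using lam by (simp add: tau_rho_def divide_right_mono)
qed

lemma tau_t_gt:
  assumes lam: "0 < lam" and r: "0 \<le> r"
    and S: "S \<subseteq> {..<n}" "S \<noteq> {}" "S \<noteq> {..<n}"
    and RS: "vol w n r S / vol w n r {..<n} \<noteq> 1/2"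
  shows "ln (sqrt 2) / lam < tau_t w n r lam S"
proof -
  define \<delta> where "\<delta> = dmin w n powr (r/2)"
  define a where "a = vol w n r S"
  define c where "c = vol w n r ({..<n} - S)"
  have n: "0 < n" using S by auto
  have \<delta>: "0 < \<delta>" "\<delta>^2 \<le> a" "\<delta>^2 \<le> c"
    using dmin_pos[OF n] dmin_powr_half_sq[OF n] dmin_powr_le_vol[OF r] S
    unfolding \<delta>_def a_def c_def by auto
  have a: "0 < a" and c: "0 < c" using \<delta> by (smt (verit) zero_less_power)+
  have V: "vol w n r {..<n} = a + c" unfolding a_def c_def using vol_split[OF S(1)] .
  have "a \<noteq> c" using RS a unfolding V a_def by auto
  hence "sqrt 2 < sqrt a * sqrt c / (sqrt (a + c) * \<bar>a / (a + c) - 1/2\<bar> * \<delta>)"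
    using \<delta> by (intro sqrt2_lt_balance_ratio)
  moreover have "a / (a + c) \<noteq> 1/2" using RS unfolding V a_def .
  ultimately have "ln (sqrt 2) < ln (sqrt a * sqrt c / (sqrt (a + c) * \<bar>a / (a + c) - 1/2\<bar> * \<delta>))"
    using a c \<delta> by (subst ln_less_cancel_iff) auto
  moreover have "tau_t w n r lam S =
      1 / lam * ln (sqrt a * sqrt c / (sqrt (a + c) * \<bar>a / (a + c) - 1/2\<bar> * \<delta>))"
    unfolding tau_t_def Let_def V a_def[symmetric] c_def[symmetric] \<delta>_def[symmetric]
    using a c by (simp add: powr_half_sqrt)
  ultimately show ?thesis using lam by (simp add: divide_strict_right_mono)
qed

end

theorem mainTheorem12:
  fixes w :: "nat \<Rightarrow> nat \<Rightarrow> real" and n :: nat and r :: real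
    and S :: "nat set" and lam :: "nat \<Rightarrow> real"
  assumes n2: "n \<ge> 2"
    and r: "0 \<le> r" "r \<le> 1"
    and sym: "\<forall>i<n. \<forall>j<n. w i j = w j i"
    and nonneg: "\<forall>i<n. \<forall>j<n. w i j \<ge> 0"
    and diag: "\<forall>i<n. w i i = 0"
    and degpos: "\<forall>i<n. deg w n i > 0"
    and conn: "connected_graph w n"
    and eig_sorted: "\<forall>i j. i \<le> j \<longrightarrow> j < n \<longrightarrow> lam i \<le> lam j"
    and eig: "char_poly (laplacian_mat w n r) = (\<Prod>i<n. [:- lam i, 1:])"
    and S: "S \<subseteq> {..<n}" "S \<noteq> {}" "S \<noteq> {..<n}"
    and RS: "vol w n r S / vol w n r {..<n} \<noteq> 1/2"
    and ratio: "lam 1 / lam (n - 1) < ln (sqrt 2) / ln (3/2)"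
  shows "tau_rho w n r (lam (n - 1)) S < tau_t w n r (lam 1) S"
proof -
  interpret weighted_graph w n using sym nonneg degpos by unfold_locales
  have lam2: "0 < lam 1" using laplacian_second_eigenvalue_pos[OF n2 conn eig_sorted eig] .
  have "lam 1 \<le> lam (n - 1)" using eig_sorted n2 by simp
  hence lamn: "0 < lam (n - 1)" using lam2 by linarith
  have "0 < ln (3/2 :: real)" by simp
  hence "ln (3/2) / lam (n - 1) < ln (sqrt 2) / lam 1"
    using ratio lam2 lamn by (simp add: field_simps)
  thus ?thesis using tau_rho_le[OF lamn r(1) S(1,2)] tau_t_gt[OF lam2 r(1) S RS] by linarith
qed

end
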